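(* Let $1\le r\le n$, let $p=(p_1,\dots,p_n)$ be a size vector, and let $A,B\subseteq S_p$ form a maximal pair of $r$-cross-intersecting families. If $i\in[n]$ is a relevant coordinate for $A$ or for $B$, then there exists $l\in[p_i]$ such that $$|\{x\in A: x_i\ne l\}|\le |A|/p_i\quad\text{and}\quad |\{y\in B: y_i\ne l\}|\le |B|/p_i.$$
   Context: $[m]=\{1,\dots,m\}$. A size vector is a sequence of integers $p=(p_1,\dots,p_n)$ with $p_i\ge 2$ for all $i$; $S_p=[p_1]\times\cdots\times[p_n]$. Two vectors $x,y\in S_p$ are $r$-intersecting if $|\{i: x_i=y_i\}|\ge r$; families $A,B\subseteq S_p$ are $r$-cross-intersecting if every $x\in A$, $y\in B$ are $r$-intersecting. A pair $(A,B)$ of $r$-cross-intersecting families in $S_p$ is maximal if it maximizes $|A|\cdot|B|$ among all $r$-cross-intersecting pairs in $S_p$. A coordinate $i$ is irrelevant for $A\subseteq S_p$ if whenever two elements of $S_p$ differ only in coordinate $i$ and one lies in $A$, so does the other; otherwise $i$ is relevant for $A$. *)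

theory Defs
  imports Complex_Main "HOL-Library.FuncSet"
begin

definition size_vector :: "nat \<Rightarrow> (nat \<Rightarrow> nat) \<Rightarrow> bool" where
  "size_vector n p \<longleftrightarrow> (\<forall>i\<in>{1..n}. p i \<ge> 2)"

definition Sp :: "nat \<Rightarrow> (nat \<Rightarrow> nat) \<Rightarrow> (nat \<Rightarrow> nat) set" where
  "Sp n p = (\<Pi>\<^sub>E i\<in>{1..n}. {1..p i})"

definition r_intersecting :: "nat \<Rightarrow> nat \<Rightarrow> (nat \<Rightarrow> nat) \<Rightarrow> (nat \<Rightarrow> nat) \<Rightarrow> bool" where
  "r_intersecting n r x y \<longleftrightarrow> card {i\<in>{1..n}. x i = y i} \<ge> r"

definition r_cross_intersecting ::
  "nat \<Rightarrow> nat \<Rightarrow> (nat \<Rightarrow> nat) set \<Rightarrow> (nat \<Rightarrow> nat) set \<Rightarrow> bool" where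
  "r_cross_intersecting n r A B \<longleftrightarrow> (\<forall>x\<in>A. \<forall>y\<in>B. r_intersecting n r x y)"

definition maximal_pair ::
  "nat \<Rightarrow> (nat \<Rightarrow> nat) \<Rightarrow> nat \<Rightarrow> (nat \<Rightarrow> nat) set \<Rightarrow> (nat \<Rightarrow> nat) set \<Rightarrow> bool" where
  "maximal_pair n p r A B \<longleftrightarrow>
     A \<subseteq> Sp n p \<and> B \<subseteq> Sp n p \<and> r_cross_intersecting n r A B \<and>
     (\<forall>A' B'. A' \<subseteq> Sp n p \<longrightarrow> B' \<subseteq> Sp n p \<longrightarrow> r_cross_intersecting n r A' B' \<longrightarrow>
        card A' * card B' \<le> card A * card B)"

definition irrelevant :: "nat \<Rightarrow> (nat \<Rightarrow> nat) \<Rightarrow> nat \<Rightarrow> (nat \<Rightarrow> nat) set \<Rightarrow> bool" where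
  "irrelevant n p i A \<longleftrightarrow>
     (\<forall>x\<in>Sp n p. \<forall>y\<in>Sp n p. (\<forall>j\<in>{1..n}. j \<noteq> i \<longrightarrow> x j = y j) \<longrightarrow> x \<in> A \<longrightarrow> y \<in> A)"

definition relevant :: "nat \<Rightarrow> (nat \<Rightarrow> nat) \<Rightarrow> nat \<Rightarrow> (nat \<Rightarrow> nat) set \<Rightarrow> bool" where
  "relevant n p i A \<longleftrightarrow> \<not> irrelevant n p i A"

end

theory Submission
  imports Defs
begin

text \<open>For \<open>c \<in> [p\<^sub>i]\<close> let \<open>\<alpha>\<^sub>c\<close> and \<open>\<beta>\<^sub>c\<close> count the members of \<open>A\<close> and \<open>B\<close> whose \<open>i\<close>-th coordinate
  is \<open>c\<close>. If \<open>X \<subseteq> A\<close> and \<open>Y \<subseteq> B\<close> never agree in coordinate \<open>i\<close>, the cylinders over \<open>X\<close> and \<open>Y\<close>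
  (all vectors agreeing with a member off coordinate \<open>i\<close>) are still \<open>r\<close>-cross-intersecting, so
  maximality gives \<open>p\<^sub>i\<^sup>2 |\<pi> X| |\<pi> Y| \<le> |A| |B|\<close>, where \<open>\<pi>\<close> forgets coordinate \<open>i\<close>; in particular
  \<open>p\<^sub>i\<^sup>2 \<alpha>\<^sub>c \<beta>\<^sub>d \<le> |A| |B|\<close> for \<open>c \<noteq> d\<close>.

  If \<open>\<alpha>\<close> and \<open>\<beta>\<close> attain their maxima at distinct values, this forces both to be constant. For
  \<open>p\<^sub>i = 2\<close> any \<open>l\<close> then works; for \<open>p\<^sub>i \<ge> 3\<close> the same bound, applied to two fibres of \<open>A\<close> against a
  third fibre of \<open>B\<close>, shows that all fibres of \<open>A\<close> have the same projection, i.e. \<open>i\<close> is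
  irrelevant for \<open>A\<close>, and likewise for \<open>B\<close>. Otherwise \<open>\<alpha>\<close> and \<open>\<beta>\<close> have a common strict maximum
  \<open>l\<close>; summing the bound over \<open>c \<noteq> l\<close> gives a quadratic inequality which bounds both ratios
  \<open>(|A| - \<alpha>\<^sub>l) / \<alpha>\<^sub>l\<close> and \<open>(|B| - \<beta>\<^sub>l) / \<beta>\<^sub>l\<close> by \<open>1 / (p\<^sub>i - 1)\<close>.\<close>

lemma finite_Sp: "finite (Sp n p)"
  unfolding Sp_def by (intro finite_PiE) auto

lemma Sp_coord_mem: "x \<in> Sp n p \<Longrightarrow> i \<in> {1..n} \<Longrightarrow> x i \<in> {1..p i}"
  unfolding Sp_def by (auto simp: PiE_iff)

lemma r_intersecting_commute: "r_intersecting n r x y \<longleftrightarrow> r_intersecting n r y x"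
proof -
  have "{j\<in>{1..n}. x j = y j} = {j\<in>{1..n}. y j = x j}"
    by auto
  then show ?thesis
    unfolding r_intersecting_def by (simp only:)
qed

lemma r_cross_intersecting_swap:
  assumes "r_cross_intersecting n r A B"
  shows "r_cross_intersecting n r B A"
  unfolding r_cross_intersecting_def
proof (intro ballI)
  fix y x assume "y \<in> B" "x \<in> A"
  then have "r_intersecting n r x y"
    using assms unfolding r_cross_intersecting_def by blast
  then show "r_intersecting n r y x"
    using r_intersecting_commute[of n r x y] by blast
qed

lemma maximal_pairD:
  assumes "maximal_pair n p r A B"
  shows "A \<subseteq> Sp n p" "B \<subseteq> Sp n p" "r_cross_intersecting n r A B"
    and "A' \<subseteq> Sp n p \<Longrightarrow> B' \<subseteq> Sp n p \<Longrightarrow> r_cross_intersecting n r A' B'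
      \<Longrightarrow> card A' * card B' \<le> card A * card B"
  using assms unfolding maximal_pair_def by blast+

lemma maximal_pair_commute:
  assumes "maximal_pair n p r A B"
  shows "maximal_pair n p r B A"
proof -
  have "card A' * card B' \<le> card B * card A"
    if "A' \<subseteq> Sp n p" "B' \<subseteq> Sp n p" "r_cross_intersecting n r A' B'" for A' B'
    using maximal_pairD(4)[OF assms that(2,1) r_cross_intersecting_swap[OF that(3)]]
    by (simp add: mult.commute)
  then show ?thesis
    unfolding maximal_pair_def
    using maximal_pairD(1,2)[OF assms] r_cross_intersecting_swap[OF maximal_pairD(3)[OF assms]]
    by blast
qed

lemma maximal_pair_nonempty:
  assumes "size_vector n p" "r \<le> n" "maximal_pair n p r A B"
  shows "A \<noteq> {}" "B \<noteq> {}"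
proof -
  define x where "x = restrict (\<lambda>_. 1::nat) {1..n}"
  have "x \<in> Sp n p"
    using assms(1) unfolding x_def Sp_def size_vector_def by auto
  moreover have "r_cross_intersecting n r {x} {x}"
  proof -
    have "{j\<in>{1..n}. x j = x j} = {1..n}"
      by blast
    then have "r_intersecting n r x x"
      using assms(2) unfolding r_intersecting_def by (simp only: card_atLeastAtMost)
    then show ?thesis
      by (simp add: r_cross_intersecting_def)
  qed
  ultimately have "card {x} * card {x} \<le> card A * card B"
    using assms(3) by (intro maximal_pairD(4)) auto
  then show "A \<noteq> {}" "B \<noteq> {}"
    by auto
qed

lemma card_eq_sum_card_coord:
  assumes "X \<subseteq> Sp n p" "i \<in> {1..n}"
  shows "card X = (\<Sum>c\<in>{1..p i}. card {x\<in>X. x i = c})"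
proof -
  have "finite X"
    using assms(1) finite_Sp finite_subset by blast
  have "(\<Union>c\<in>{1..p i}. {x\<in>X. x i = c}) = X"
    using assms Sp_coord_mem by blast
  moreover have "card (\<Union>c\<in>{1..p i}. {x\<in>X. x i = c}) = (\<Sum>c\<in>{1..p i}. card {x\<in>X. x i = c})"
    by (rule card_UN_disjoint) (use \<open>finite X\<close> in auto)
  ultimately show ?thesis
    by simp
qed

lemma fun_upd_eq_imp_eq:
  assumes "x(i := c) = y(i := c)" "x i = y i"
  shows "x = y"
proof -
  have "x = (x(i := c))(i := x i)"
    by simp
  also have "\<dots> = (y(i := c))(i := y i)"
    by (simp only: assms)
  also have "\<dots> = y"
    by simp
  finally show ?thesis .
qed

lemma inj_on_fun_upd_coord:
  assumes "\<forall>x\<in>X. x i = a"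
  shows "inj_on (\<lambda>x. x(i := b)) X"
proof (rule inj_onI)
  fix x y assume "x \<in> X" "y \<in> X" and eq: "x(i := b) = y(i := b)"
  then have "x i = a" "y i = a"
    using assms by blast+
  then show "x = y"
    by (intro fun_upd_eq_imp_eq[OF eq]) simp
qed

lemma Sp_fun_upd_eq:
  assumes x: "x \<in> Sp n p" and y: "y \<in> Sp n p" and agree: "\<forall>j\<in>{1..n}. j \<noteq> i \<longrightarrow> x j = y j"
  shows "x(i := c) = y(i := c)"
proof (rule ext)
  fix j
  show "(x(i := c)) j = (y(i := c)) j"
  proof (cases "j \<in> {1..n}")
    case False
    then have "x j = y j"
      using PiE_arb[OF x[unfolded Sp_def]] PiE_arb[OF y[unfolded Sp_def]] by simp
    then show ?thesis
      using False by simp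
  qed (use agree in simp)
qed

section \<open>Cylinders over a coordinate\<close>

text \<open>\<open>x(i := 1)\<close> serves as the projection forgetting coordinate \<open>i\<close>.\<close>

definition cylinder :: "nat \<Rightarrow> (nat \<Rightarrow> nat) \<Rightarrow> nat \<Rightarrow> (nat \<Rightarrow> nat) set \<Rightarrow> (nat \<Rightarrow> nat) set" where
  "cylinder n p i X = {y \<in> Sp n p. \<exists>x\<in>X. y(i := 1) = x(i := 1)}"

lemma cylinder_subset_Sp: "cylinder n p i X \<subseteq> Sp n p"
  unfolding cylinder_def by auto

lemma card_cylinder:
  assumes "X \<subseteq> Sp n p" "i \<in> {1..n}"
  shows "card (cylinder n p i X) = p i * card ((\<lambda>x. x(i := 1)) ` X)"
proof -
  have "bij_betw (\<lambda>y. (y(i := 1), y i)) (cylinder n p i X) ((\<lambda>x. x(i := 1)) ` X \<times> {1..p i})"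
  proof (rule bij_betwI')
    fix y z :: "nat \<Rightarrow> nat"
    show "((y(i := 1), y i) = (z(i := 1), z i)) = (y = z)"
      by (metis fun_upd_triv fun_upd_upd prod.inject)
  next
    fix y assume "y \<in> cylinder n p i X"
    then show "(y(i := 1), y i) \<in> (\<lambda>x. x(i := 1)) ` X \<times> {1..p i}"
      using assms(2) Sp_coord_mem unfolding cylinder_def by auto
  next
    fix w assume "w \<in> (\<lambda>x. x(i := 1)) ` X \<times> {1..p i}"
    then obtain x c where x: "x \<in> X" "c \<in> {1..p i}" and w: "w = (x(i := 1), c)"
      by auto
    have "x(i := c) \<in> Sp n p"
      using x assms unfolding Sp_def by (auto simp: PiE_iff extensional_def)
    then have "x(i := c) \<in> cylinder n p i X"
      using x(1) unfolding cylinder_def by force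
    then show "\<exists>y\<in>cylinder n p i X. w = (y(i := 1), y i)"
      using w by (intro bexI[of _ "x(i := c)"]) auto
  qed
  then show ?thesis
    by (simp add: bij_betw_same_card card_cartesian_product)
qed

text \<open>Coordinate \<open>i\<close> is never an agreement of a pair from \<open>X \<times> Y\<close>, so freeing it keeps all
  agreements of the pair.\<close>

lemma r_cross_intersecting_cylinder:
  assumes "r_cross_intersecting n r X Y" "\<forall>x\<in>X. \<forall>y\<in>Y. x i \<noteq> y i"
  shows "r_cross_intersecting n r (cylinder n p i X) (cylinder n p i Y)"
  unfolding r_cross_intersecting_def
proof (intro ballI)
  fix x' y' assume "x' \<in> cylinder n p i X" "y' \<in> cylinder n p i Y"
  then obtain x y where xy: "x \<in> X" "y \<in> Y" "x'(i := 1) = x(i := 1)" "y'(i := 1) = y(i := 1)"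
    unfolding cylinder_def by auto
  have "{j\<in>{1..n}. x j = y j} \<subseteq> {j\<in>{1..n}. x' j = y' j}"
  proof
    fix j assume j: "j \<in> {j\<in>{1..n}. x j = y j}"
    then have "j \<noteq> i"
      using assms(2) xy by auto
    then have "x' j = x j" "y' j = y j"
      using xy(3,4) by (metis fun_upd_other)+
    then show "j \<in> {j\<in>{1..n}. x' j = y' j}"
      using j by simp
  qed
  then have "card {j\<in>{1..n}. x j = y j} \<le> card {j\<in>{1..n}. x' j = y' j}"
    by (intro card_mono) auto
  moreover have "r_intersecting n r x y"
    using assms(1) xy unfolding r_cross_intersecting_def by blast
  ultimately show "r_intersecting n r x' y'"
    unfolding r_intersecting_def by linarith
qed

lemma maximal_pair_cylinder_le:
  assumes max: "maximal_pair n p r A B" and i: "i \<in> {1..n}"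
    and "X \<subseteq> A" "Y \<subseteq> B" "\<forall>x\<in>X. \<forall>y\<in>Y. x i \<noteq> y i"
  shows "p i * card ((\<lambda>x. x(i := 1)) ` X) * (p i * card ((\<lambda>y. y(i := 1)) ` Y))
           \<le> card A * card B"
proof -
  have "X \<subseteq> Sp n p" "Y \<subseteq> Sp n p"
    using assms(3,4) maximal_pairD(1,2)[OF max] by blast+
  have "r_cross_intersecting n r X Y"
    using maximal_pairD(3)[OF max] assms(3,4) unfolding r_cross_intersecting_def by blast
  then have "r_cross_intersecting n r (cylinder n p i X) (cylinder n p i Y)"
    using assms(5) by (rule r_cross_intersecting_cylinder)
  then have "card (cylinder n p i X) * card (cylinder n p i Y) \<le> card A * card B"
    by (intro maximal_pairD(4)[OF max] cylinder_subset_Sp)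
  then show ?thesis
    by (simp only: card_cylinder[OF \<open>X \<subseteq> Sp n p\<close> i] card_cylinder[OF \<open>Y \<subseteq> Sp n p\<close> i])
qed

lemma card_image_fun_upd_coord:
  assumes "finite X"
  shows "card ((\<lambda>x. x(i := 1)) ` {x\<in>X. x i = c}) = card {x\<in>X. x i = c}"
  by (rule card_image, rule inj_on_fun_upd_coord[where a = c]) simp

text \<open>For distinct \<open>c, d\<close> and a third value \<open>e\<close>, the cylinder bound for \<open>A\<^sub>c \<union> A\<^sub>d\<close> against
  \<open>B\<^sub>e\<close> shows that \<open>A\<^sub>d\<close> adds no new projection to \<open>A\<^sub>c\<close>.\<close>

lemma uniform_fibres_imp_irrelevant:
  assumes max: "maximal_pair n p r A B" and i: "i \<in> {1..n}" and "3 \<le> p i"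
    and fibA: "\<forall>c\<in>{1..p i}. card {x\<in>A. x i = c} = a"
    and fibB: "\<forall>c\<in>{1..p i}. card {y\<in>B. y i = c} = b" and "0 < b"
  shows "irrelevant n p i A"
proof -
  define proj where "proj = (\<lambda>x::nat \<Rightarrow> nat. x(i := 1))"
  note sub = maximal_pairD(1,2)[OF max]
  then have fin: "finite A" "finite B"
    using finite_Sp finite_subset by blast+
  have card_A: "card A = p i * a" and card_B: "card B = p i * b"
    using card_eq_sum_card_coord[OF sub(1) i] card_eq_sum_card_coord[OF sub(2) i] fibA fibB
    by simp_all
  have proj_fibre: "proj ` {x\<in>A. x i = d} \<subseteq> proj ` {x\<in>A. x i = c}"
    if c: "c \<in> {1..p i}" and d: "d \<in> {1..p i}" and "c \<noteq> d" for c d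
  proof -
    have "\<exists>e\<in>{1, 2, 3::nat}. e \<noteq> c \<and> e \<noteq> d"
      by auto
    then obtain e where "e \<in> {1, 2, 3}" "e \<noteq> c" "e \<noteq> d"
      by blast
    then have e: "e \<in> {1..p i}" "e \<noteq> c" "e \<noteq> d"
      using \<open>3 \<le> p i\<close> by auto
    let ?X = "{x\<in>A. x i = c} \<union> {x\<in>A. x i = d}"
    let ?Y = "{y\<in>B. y i = e}"
    have "p i * card (proj ` ?X) * (p i * card (proj ` ?Y)) \<le> card A * card B"
      unfolding proj_def using e by (intro maximal_pair_cylinder_le[OF max i]) auto
    moreover have "card (proj ` ?Y) = b"
      using card_image_fun_upd_coord[OF fin(2)] fibB e unfolding proj_def by simp
    ultimately have "(p i * p i * b) * card (proj ` ?X) \<le> (p i * p i * b) * a"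
      unfolding card_A card_B by (simp add: ac_simps)
    moreover have "0 < p i * p i * b"
      using \<open>3 \<le> p i\<close> \<open>0 < b\<close> by simp
    ultimately have "card (proj ` ?X) \<le> a"
      by (simp only: nat_mult_le_cancel1)
    also have "a = card (proj ` {x\<in>A. x i = c})"
      using card_image_fun_upd_coord[OF fin(1)] fibA c unfolding proj_def by simp
    finally have le: "card (proj ` ?X) \<le> card (proj ` {x\<in>A. x i = c})" .
    have "finite (proj ` ?X)"
      using fin(1) by (simp add: finite_subset[of _ A])
    moreover have "proj ` {x\<in>A. x i = c} \<subseteq> proj ` ?X"
      by (rule image_mono) blast
    ultimately have "proj ` {x\<in>A. x i = c} = proj ` ?X"
      using le by (rule card_seteq)
    moreover have "proj ` {x\<in>A. x i = d} \<subseteq> proj ` ?X"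
      by (rule image_mono) blast
    ultimately show ?thesis
      by (simp only:)
  qed
  show ?thesis
    unfolding irrelevant_def
  proof (intro ballI impI)
    fix x y assume x: "x \<in> Sp n p" and y: "y \<in> Sp n p"
      and agree: "\<forall>j\<in>{1..n}. j \<noteq> i \<longrightarrow> x j = y j" and "x \<in> A"
    have "proj x \<in> proj ` {z\<in>A. z i = x i}"
      using \<open>x \<in> A\<close> by blast
    then have "proj x \<in> proj ` {z\<in>A. z i = y i}"
      using proj_fibre[OF Sp_coord_mem[OF y i] Sp_coord_mem[OF x i]] by (cases "x i = y i") auto
    then obtain z where z: "z \<in> A" "z i = y i" "proj z = proj x"
      by auto
    have "proj x = proj y"
      unfolding proj_def using x y agree by (rule Sp_fun_upd_eq)
    then have "z(i := 1) = y(i := 1)"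
      using z(3) unfolding proj_def by simp
    then have "z = y"
      using z(2) by (rule fun_upd_eq_imp_eq)
    then show "y \<in> A"
      using z(1) by simp
  qed
qed

section \<open>The quadratic inequality\<close>

lemma peak_ratio_bound_ordered:
  fixes q u v s t :: real
  assumes "1 < q" "0 < u" "0 < v" "0 \<le> s" "s < (q - 1) * u" "t * u \<le> s * v"
    and "q\<^sup>2 * s * v \<le> (q - 1) * ((u + s) * (v + t))"
  shows "(q - 1) * s \<le> u"
proof -
  have "(v + t) * u \<le> (u + s) * v"
    using assms(6) by (simp add: algebra_simps)
  then have "(q - 1) * (u + s) * ((v + t) * u) \<le> (q - 1) * (u + s) * ((u + s) * v)"
    by (rule mult_left_mono) (use assms(1,2,4) in simp)
  moreover have "q\<^sup>2 * s * v * u \<le> (q - 1) * ((u + s) * (v + t)) * u"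
    using assms(2,7) by (simp add: mult_right_mono)
  ultimately have "(q\<^sup>2 * s * u) * v \<le> ((q - 1) * (u + s) * (u + s)) * v"
    by (simp add: algebra_simps)
  then have "q\<^sup>2 * s * u \<le> (q - 1) * (u + s) * (u + s)"
    using assms(3) by simp
  \<comment> \<open>\<open>(q - 1) (u + s)\<^sup>2 - q\<^sup>2 s u = ((q - 1) s - u) (s - (q - 1) u)\<close>\<close>
  then have "0 \<le> ((q - 1) * s - u) * (s - (q - 1) * u)"
    by (simp add: algebra_simps power2_eq_square)
  then show ?thesis
    using assms(5) by (simp add: zero_le_mult_iff)
qed

text \<open>With \<open>u, v\<close> the heaviest fibres of \<open>A, B\<close> and \<open>s, t\<close> the remaining weight, the bound
  \<open>s \<le> (u + s) / q\<close> follows from the cross bounds; the case \<open>s v < t u\<close> reduces to the other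
  family by symmetry.\<close>

lemma peak_ratio_bound:
  fixes q u v s t :: real
  assumes "1 < q" "0 < u" "0 < v" "0 \<le> s" "0 \<le> t" "s < (q - 1) * u" "t < (q - 1) * v"
    and "q\<^sup>2 * s * v \<le> (q - 1) * ((u + s) * (v + t))"
    and "q\<^sup>2 * u * t \<le> (q - 1) * ((u + s) * (v + t))"
  shows "(q - 1) * s \<le> u"
proof (cases "t * u \<le> s * v")
  case True
  then show ?thesis
    using assms peak_ratio_bound_ordered by blast
next
  case False
  have "(q - 1) * t \<le> v"
    using assms False by (intro peak_ratio_bound_ordered[of q v u t s]) (auto simp: algebra_simps)
  then have "(q - 1) * s * v \<le> (q - 1) * t * u"
    using False assms(1) by (simp add: mult.assoc mult_left_mono mult.commute)
  also have "\<dots> \<le> v * u"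
    using \<open>(q - 1) * t \<le> v\<close> assms(2) by (simp add: mult_right_mono)
  finally show ?thesis
    using assms(3) by (simp add: mult.commute)
qed

lemma peak_ratio_bound_nat:
  fixes q u v s t :: nat
  assumes "2 \<le> q" "0 < u" "0 < v" "s < (q - 1) * u" "t < (q - 1) * v"
    and "q * q * s * v \<le> (q - 1) * ((u + s) * (v + t))"
    and "q * q * u * t \<le> (q - 1) * ((u + s) * (v + t))"
  shows "real s \<le> real (u + s) / real q"
proof -
  have q1: "real (q - 1) = real q - 1"
    using assms(1) by simp
  have "real s < (real q - 1) * real u" "real t < (real q - 1) * real v"
    using assms(4,5) unfolding q1[symmetric] of_nat_mult[symmetric] by (simp_all only: of_nat_less_iff)
  moreover have "(real q)\<^sup>2 * real s * real v \<le> (real q - 1) * ((real u + real s) * (real v + real t))"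
    "(real q)\<^sup>2 * real u * real t \<le> (real q - 1) * ((real u + real s) * (real v + real t))"
    using assms(6,7) unfolding power2_eq_square q1[symmetric] of_nat_mult[symmetric] of_nat_add[symmetric]
    by (simp_all only: of_nat_le_iff)
  moreover have "1 < real q" "0 < real u" "0 < real v" "0 \<le> real s" "0 \<le> real t"
    using assms(1-3) by simp_all
  ultimately have "(real q - 1) * real s \<le> real u"
    using peak_ratio_bound by blast
  then show ?thesis
    using assms(1) by (simp add: field_simps)
qed

section \<open>Fibres of a maximal pair over a coordinate\<close>

lemma sum_eq_card_mult_bound_imp_eq:
  fixes f :: "'a \<Rightarrow> nat"
  assumes "finite S" "\<forall>c\<in>S. f c \<le> m" "card S * m \<le> (\<Sum>c\<in>S. f c)"
  shows "\<forall>c\<in>S. f c = m"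
proof (rule ccontr)
  assume "\<not> (\<forall>c\<in>S. f c = m)"
  then obtain d where "d \<in> S" "f d < m"
    using assms(2) by fastforce
  then have "(\<Sum>c\<in>S. f c) < (\<Sum>c\<in>S. m)"
    using assms(1,2) by (intro sum_strict_mono_ex1) auto
  then show False
    using assms(3) by simp
qed

locale coordinate_fibres =
  fixes n r :: nat and p :: "nat \<Rightarrow> nat" and A B :: "(nat \<Rightarrow> nat) set" and i :: nat
  assumes maximal: "maximal_pair n p r A B"
    and coord: "i \<in> {1..n}"
    and two_le: "2 \<le> p i"
    and nonempty: "A \<noteq> {}" "B \<noteq> {}"
begin

definition \<alpha> :: "nat \<Rightarrow> nat" where
  "\<alpha> c = card {x\<in>A. x i = c}"

definition \<beta> :: "nat \<Rightarrow> nat" where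
  "\<beta> c = card {y\<in>B. y i = c}"

definition peak :: "(nat \<Rightarrow> nat) \<Rightarrow> nat \<Rightarrow> bool" where
  "peak f a \<longleftrightarrow> a \<in> {1..p i} \<and> (\<forall>c\<in>{1..p i}. f c \<le> f a)"

lemma subset_Sp: "A \<subseteq> Sp n p" "B \<subseteq> Sp n p"
  using maximal_pairD(1,2)[OF maximal] .

lemma finite_A: "finite A" and finite_B: "finite B"
  using subset_Sp finite_Sp finite_subset by blast+

lemma card_A_pos: "0 < card A" and card_B_pos: "0 < card B"
  using nonempty finite_A finite_B by (simp_all add: card_gt_0_iff)

lemma card_A_eq_sum: "card A = (\<Sum>c\<in>{1..p i}. \<alpha> c)"
  unfolding \<alpha>_def by (rule card_eq_sum_card_coord[OF subset_Sp(1) coord])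

lemma card_B_eq_sum: "card B = (\<Sum>c\<in>{1..p i}. \<beta> c)"
  unfolding \<beta>_def by (rule card_eq_sum_card_coord[OF subset_Sp(2) coord])

lemma card_A_coord_neq: "card {x\<in>A. x i \<noteq> l} = card A - \<alpha> l"
proof -
  have "{x\<in>A. x i \<noteq> l} = A - {x\<in>A. x i = l}"
    by blast
  then show ?thesis
    unfolding \<alpha>_def using finite_A by (simp add: card_Diff_subset)
qed

lemma card_B_coord_neq: "card {y\<in>B. y i \<noteq> l} = card B - \<beta> l"
proof -
  have "{y\<in>B. y i \<noteq> l} = B - {y\<in>B. y i = l}"
    by blast
  then show ?thesis
    unfolding \<beta>_def using finite_B by (simp add: card_Diff_subset)
qed

lemma fibre_product_le:
  assumes "c \<noteq> d"
  shows "p i * p i * \<alpha> c * \<beta> d \<le> card A * card B"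
proof -
  have "p i * card ((\<lambda>x. x(i := 1)) ` {x\<in>A. x i = c})
          * (p i * card ((\<lambda>y. y(i := 1)) ` {y\<in>B. y i = d})) \<le> card A * card B"
    using assms by (intro maximal_pair_cylinder_le[OF maximal coord]) auto
  then show ?thesis
    unfolding \<alpha>_def \<beta>_def card_image_fun_upd_coord[OF finite_A]
      card_image_fun_upd_coord[OF finite_B]
    by (simp add: ac_simps)
qed

lemma peak_exists: "\<exists>a. peak f a"
proof -
  let ?m = "Max (f ` {1..p i})"
  have "?m \<in> f ` {1..p i}"
    using two_le by (intro Max_in) auto
  then obtain a where "a \<in> {1..p i}" "f a = ?m"
    by auto
  moreover have "f c \<le> ?m" if "c \<in> {1..p i}" for c
    using that by (intro Max_ge) auto
  ultimately show ?thesis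
    unfolding peak_def by auto
qed

lemma peak_if_not_less: "peak f a \<Longrightarrow> c \<in> {1..p i} \<Longrightarrow> \<not> f c < f a \<Longrightarrow> peak f c"
  unfolding peak_def not_less by (auto intro: order.trans)

text \<open>Distinct peaks \<open>a \<noteq> b\<close> force \<open>p\<^sub>i\<^sup>2 \<alpha>\<^sub>a \<beta>\<^sub>b \<le> |A| |B| \<le> p\<^sub>i\<^sup>2 \<alpha>\<^sub>a \<beta>\<^sub>b\<close>, hence equality throughout.\<close>

lemma distinct_peaks_imp_uniform:
  assumes "peak \<alpha> a" "peak \<beta> b" "a \<noteq> b"
  shows "\<forall>c\<in>{1..p i}. \<alpha> c = \<alpha> a" "\<forall>c\<in>{1..p i}. \<beta> c = \<beta> b"
proof -
  have le_A: "card A \<le> p i * \<alpha> a" and le_B: "card B \<le> p i * \<beta> b"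
    using assms(1,2) sum_bounded_above[of "{1..p i}" \<alpha> "\<alpha> a"] sum_bounded_above[of "{1..p i}" \<beta> "\<beta> b"]
    unfolding peak_def card_A_eq_sum card_B_eq_sum by auto
  have prod: "(p i * \<alpha> a) * (p i * \<beta> b) \<le> card A * card B"
    using fibre_product_le[OF assms(3)] by (simp add: ac_simps)
  have "p i * \<alpha> a \<le> card A"
  proof (rule ccontr)
    assume "\<not> ?thesis"
    then have "card A * card B < (p i * \<alpha> a) * card B"
      using card_B_pos by simp
    also have "\<dots> \<le> (p i * \<alpha> a) * (p i * \<beta> b)"
      using le_B by simp
    finally show False
      using prod by simp
  qed
  then show "\<forall>c\<in>{1..p i}. \<alpha> c = \<alpha> a"
    using assms(1) unfolding peak_def card_A_eq_sum
    by (intro sum_eq_card_mult_bound_imp_eq) auto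
  have "p i * \<beta> b \<le> card B"
  proof (rule ccontr)
    assume "\<not> ?thesis"
    then have "card A * card B < card A * (p i * \<beta> b)"
      using card_A_pos by simp
    also have "\<dots> \<le> (p i * \<alpha> a) * (p i * \<beta> b)"
      using le_A by simp
    finally show False
      using prod by simp
  qed
  then show "\<forall>c\<in>{1..p i}. \<beta> c = \<beta> b"
    using assms(2) unfolding peak_def card_B_eq_sum
    by (intro sum_eq_card_mult_bound_imp_eq) auto
qed

lemma distinct_peaks_imp_balanced:
  assumes "peak \<alpha> a" "peak \<beta> b" "a \<noteq> b" "relevant n p i A \<or> relevant n p i B"
  shows "\<exists>l\<in>{1..p i}.
           real (card {x\<in>A. x i \<noteq> l}) \<le> real (card A) / real (p i) \<and>
           real (card {y\<in>B. y i \<noteq> l}) \<le> real (card B) / real (p i)"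
proof -
  note uniform = distinct_peaks_imp_uniform[OF assms(1-3)]
  have "card A = (\<Sum>c\<in>{1..p i}. \<alpha> a)"
    unfolding card_A_eq_sum by (rule sum.cong) (use uniform(1) in blast)+
  then have card_A: "card A = p i * \<alpha> a"
    by simp
  have "card B = (\<Sum>c\<in>{1..p i}. \<beta> b)"
    unfolding card_B_eq_sum by (rule sum.cong) (use uniform(2) in blast)+
  then have card_B: "card B = p i * \<beta> b"
    by simp
  have "p i = 2"
  proof (rule ccontr)
    assume "p i \<noteq> 2"
    then have "3 \<le> p i"
      using two_le by simp
    have "0 < \<alpha> a" "0 < \<beta> b"
      using card_A_pos card_B_pos unfolding card_A card_B by simp_all
    moreover have "\<forall>c\<in>{1..p i}. card {x\<in>A. x i = c} = \<alpha> a"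
      using uniform(1) unfolding \<alpha>_def .
    moreover have "\<forall>c\<in>{1..p i}. card {y\<in>B. y i = c} = \<beta> b"
      using uniform(2) unfolding \<beta>_def .
    ultimately have "irrelevant n p i A" "irrelevant n p i B"
      using uniform_fibres_imp_irrelevant[OF maximal coord \<open>3 \<le> p i\<close>]
        uniform_fibres_imp_irrelevant[OF maximal_pair_commute[OF maximal] coord \<open>3 \<le> p i\<close>]
      by blast+
    then show False
      using assms(4) unfolding relevant_def by blast
  qed
  have "1 \<in> {1..p i}"
    using two_le by simp
  then have "\<alpha> 1 = \<alpha> a" "\<beta> 1 = \<beta> b"
    using uniform by blast+
  then have "card {x\<in>A. x i \<noteq> 1} = \<alpha> a" "card {y\<in>B. y i \<noteq> 1} = \<beta> b"
    using \<open>p i = 2\<close> unfolding card_A_coord_neq card_B_coord_neq card_A card_B by simp_all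
  then show ?thesis
    using \<open>1 \<in> {1..p i}\<close> unfolding card_A card_B \<open>p i = 2\<close>
    by (intro bexI[of _ 1]) simp_all
qed

lemma sum_fibre_product_le:
  assumes "l \<in> {1..p i}"
  shows "p i * p i * (card A - \<alpha> l) * \<beta> l \<le> (p i - 1) * (card A * card B)"
    and "p i * p i * \<alpha> l * (card B - \<beta> l) \<le> (p i - 1) * (card A * card B)"
proof -
  let ?S = "{1..p i} - {l}"
  have card_S: "card ?S = p i - 1"
    using assms by simp
  have A_rest: "card A - \<alpha> l = (\<Sum>c\<in>?S. \<alpha> c)" and B_rest: "card B - \<beta> l = (\<Sum>c\<in>?S. \<beta> c)"
    using assms unfolding card_A_eq_sum card_B_eq_sum by (simp_all add: sum.remove)
  have sum_bound: "(\<Sum>c\<in>?S. card A * card B) = (p i - 1) * (card A * card B)"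
    using card_S by simp
  have "p i * p i * (card A - \<alpha> l) * \<beta> l = (\<Sum>c\<in>?S. p i * p i * \<alpha> c * \<beta> l)"
    unfolding A_rest by (simp add: sum_distrib_left sum_distrib_right)
  also have "\<dots> \<le> (\<Sum>c\<in>?S. card A * card B)"
    using fibre_product_le by (intro sum_mono) auto
  finally show "p i * p i * (card A - \<alpha> l) * \<beta> l \<le> (p i - 1) * (card A * card B)"
    unfolding sum_bound .
  have "p i * p i * \<alpha> l * (card B - \<beta> l) = (\<Sum>c\<in>?S. p i * p i * \<alpha> l * \<beta> c)"
    unfolding B_rest by (simp add: sum_distrib_left)
  also have "\<dots> \<le> (\<Sum>c\<in>?S. card A * card B)"
    using fibre_product_le by (intro sum_mono) auto
  finally show "p i * p i * \<alpha> l * (card B - \<beta> l) \<le> (p i - 1) * (card A * card B)"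
    unfolding sum_bound .
qed

lemma strict_peak_rest_less:
  assumes "l \<in> {1..p i}" "\<forall>c\<in>{1..p i} - {l}. f c < f l"
  shows "(\<Sum>c\<in>{1..p i} - {l}. f c) < (p i - 1) * f l"
proof -
  have "(if l = 1 then 2 else 1) \<in> {1..p i} - {l}"
    using assms(1) two_le by auto
  then have "{1..p i} - {l} \<noteq> {}"
    by blast
  then have "(\<Sum>c\<in>{1..p i} - {l}. f c) < (\<Sum>c\<in>{1..p i} - {l}. f l)"
    using assms(2) by (intro sum_strict_mono) auto
  then show ?thesis
    using assms(1) by simp
qed

lemma common_peak_imp_balanced:
  assumes l: "l \<in> {1..p i}"
    and strict_A: "\<forall>c\<in>{1..p i} - {l}. \<alpha> c < \<alpha> l"
    and strict_B: "\<forall>c\<in>{1..p i} - {l}. \<beta> c < \<beta> l"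
  shows "real (card {x\<in>A. x i \<noteq> l}) \<le> real (card A) / real (p i) \<and>
         real (card {y\<in>B. y i \<noteq> l}) \<le> real (card B) / real (p i)"
proof -
  define s t where "s = card A - \<alpha> l" and "t = card B - \<beta> l"
  have A_split: "card A = \<alpha> l + s" and B_split: "card B = \<beta> l + t"
    using l unfolding s_def t_def card_A_eq_sum card_B_eq_sum by (simp_all add: sum.remove)
  have s_less: "s < (p i - 1) * \<alpha> l" and t_less: "t < (p i - 1) * \<beta> l"
    using strict_peak_rest_less[OF l strict_A] strict_peak_rest_less[OF l strict_B] l
    unfolding s_def t_def card_A_eq_sum card_B_eq_sum by (simp_all add: sum.remove)
  have "0 < \<alpha> l" "0 < \<beta> l"
    using s_less t_less by (cases "\<alpha> l", simp_all, cases "\<beta> l", simp_all)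
  note cross = sum_fibre_product_le[OF l, folded s_def t_def, unfolded A_split B_split]
  have "real s \<le> real (\<alpha> l + s) / real (p i)"
    using two_le \<open>0 < \<alpha> l\<close> \<open>0 < \<beta> l\<close> s_less t_less cross
    by (rule peak_ratio_bound_nat)
  moreover have "real t \<le> real (\<beta> l + t) / real (p i)"
    using two_le \<open>0 < \<beta> l\<close> \<open>0 < \<alpha> l\<close> t_less s_less cross
    by (intro peak_ratio_bound_nat[of "p i" "\<beta> l" "\<alpha> l" t s]) (simp_all add: ac_simps)
  ultimately show ?thesis
    unfolding card_A_coord_neq card_B_coord_neq s_def[symmetric] t_def[symmetric]
    unfolding A_split B_split by simp
qed

end

theorem lemma9:
  fixes n r i :: nat and p :: "nat \<Rightarrow> nat" and A B :: "(nat \<Rightarrow> nat) set"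
  assumes "1 \<le> r" and "r \<le> n"
    and "size_vector n p"
    and "maximal_pair n p r A B"
    and "i \<in> {1..n}"
    and "relevant n p i A \<or> relevant n p i B"
  shows "\<exists>l\<in>{1..p i}.
           real (card {x\<in>A. x i \<noteq> l}) \<le> real (card A) / real (p i) \<and>
           real (card {y\<in>B. y i \<noteq> l}) \<le> real (card B) / real (p i)"
proof -
  interpret coordinate_fibres n r p A B i
    using assms maximal_pair_nonempty by unfold_locales (auto simp: size_vector_def)
  obtain a b where a: "peak \<alpha> a" and b: "peak \<beta> b"
    using peak_exists by blast
  show ?thesis
  proof (cases "\<exists>a' b'. peak \<alpha> a' \<and> peak \<beta> b' \<and> a' \<noteq> b'")
    case True
    then show ?thesis
      using distinct_peaks_imp_balanced assms(6) by blast
  next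
    case False
    then have "\<forall>c\<in>{1..p i} - {a}. \<alpha> c < \<alpha> a" "\<forall>c\<in>{1..p i} - {a}. \<beta> c < \<beta> a"
      using a b peak_if_not_less by blast+
    then show ?thesis
      using common_peak_imp_balanced a unfolding peak_def by blast
  qed
qed

end
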